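(* Let $\mathcal{D}$ be a probability distribution over triples $(x,y,z)$, $\rho>0$, and let $S$ be an i.i.d. sample of size $N$ from $\mathcal{D}$. Define $l_J(x,y,z;u,v,w) = -l_p(h_p(g(x;u);v),y)+\rho\,l_u(h_u(g(x;u);w),z)$. Let $(u^\ast,v^\ast,w^\ast)$ solve the expected-risk problem $$E_{\mathcal{D}}[l_J(u^\ast,v^\ast,w^\ast)] = \min_u\Big[\max_v E_{\mathcal{D}}[-l_p(u,v)] + \rho\min_w E_{\mathcal{D}}[l_u(u,w)]\Big]$$ (with $v^\ast$, $w^\ast$ the inner optimizers at $u^\ast$), and let $(\hat u,\hat v,\hat w)$ solve the same problem with $E_{\mathcal{D}}$ replaced by the empirical mean $E_S$ (with $\hat v$, $\hat w$ the empirical inner optimizers at $\hat u$). Then $$E_{S\sim\mathcal{D}^N}\Big[\big|E_{\mathcal{D}}[l_J(u^\ast,v^\ast,w^\ast)] - E_{\mathcal{D}}[l_J(\hat u,\hat v,\hat w)]\big|\Big] \le 4\,E_{S\sim\mathcal{D}^N}\Big[\mathfrak{R}(l_p\circ H_p\circ G\circ S) + \rho\,\mathfrak{R}(l_u\circ H_u\circ G\circ S)\Big].$$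
   Context: Setting: $\mathcal{X}\subset\mathbb{R}^D$; a filter $g(\cdot;u):\mathcal{X}\to\mathbb{R}^d$ with $u\in\mathcal{U}$; predictors $h_p(\cdot;v)$, $v\in\mathcal{V}$, and $h_u(\cdot;w)$, $w\in\mathcal{W}$, on filter outputs; real-valued losses $l_p,l_u$. $\mathcal{U},\mathcal{V},\mathcal{W}$ are compact convex subsets of Euclidean spaces and all maps are continuous so that optima are attained. Notation: $l_p(u,v)$ denotes $l_p(h_p(g(x;u);v),y)$, $l_u(u,w)$ denotes $l_u(h_u(g(x;u);w),z)$; $E_{\mathcal{D}}$ is expectation over $(x,y,z)\sim\mathcal{D}$ and $E_S[f]=\frac1N\sum_{(x,y,z)\in S}f(x,y,z)$. Function classes: $l_p\circ H_p\circ G\circ S=\{(x,y,z)\mapsto l_p(h_p(g(x;u);v),y):u\in\mathcal{U},v\in\mathcal{V}\}$ and $l_u\circ H_u\circ G\circ S=\{(x,y,z)\mapsto l_u(h_u(g(x;u);w),z):u\in\mathcal{U},w\in\mathcal{W}\}$. For a class $F$ and sample $S=\{(x_i,y_i,z_i)\}_{i=1}^N$, the empirical Rademacher complexity is $\mathfrak{R}(F\circ S)=\frac1N E_{\sigma\sim\{-1,+1\}^N}\big[\sup_{f\in F}\sum_{i=1}^N\sigma_i f(x_i,y_i,z_i)\big]$ with $\sigma$ uniform on $\{-1,+1\}^N$. *)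

theory Defs
  imports "HOL-Probability.Probability"
begin

definition emp_mean :: "nat \<Rightarrow> (nat \<Rightarrow> 'd) \<Rightarrow> ('d \<Rightarrow> real) \<Rightarrow> real" where
  "emp_mean N S f = (\<Sum>i<N. f (S i)) / real N"

definition rademacher :: "nat \<Rightarrow> ('d \<Rightarrow> real) set \<Rightarrow> (nat \<Rightarrow> 'd) \<Rightarrow> real" where
  "rademacher N F S =
     (1 / real N) * ((\<Sum>\<sigma>\<in>({..<N} \<rightarrow>\<^sub>E {-1::real, 1}). (SUP f\<in>F. \<Sum>i<N. \<sigma> i * f (S i))) / 2 ^ N)"

end

theory Submission
  imports Defs
begin

text \<open>Both solutions are optimal for their own objective. Hence, up to an arbitrarily small
  error, the population objectives at the population solution and at the empirical solution differ
  by at most \<open>\<Delta>\<^sub>p(t\<^sub>1) - \<Delta>\<^sub>p(t\<^sub>2) + \<rho> (\<Delta>\<^sub>u(t\<^sub>3) - \<Delta>\<^sub>u(t\<^sub>4))\<close> for suitable parameters \<open>t\<^sub>i\<close>,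
  where \<open>\<Delta>(t)\<close> is the deviation of the empirical from the expected loss at \<open>t\<close>. Writing each
  expectation as an expectation over an independent ghost sample bounds \<open>\<Delta>(t\<^sub>1) - \<Delta>(t\<^sub>2)\<close> by the
  supremal deviation between the sample and the ghost sample. Exchanging sample and ghost points
  according to random signs does not change the law of the double sample; averaging over the signs
  and splitting each supremum into a supremum over the sample and one over the ghost sample gives
  four times the Rademacher complexity.\<close>

lemma bdd_above_image_continuous_on:
  fixes F :: "'t::metric_space \<Rightarrow> real"
  assumes "compact T" "continuous_on T F"
  shows "bdd_above (F ` T)"
  using compact_continuous_image[OF assms(2,1)] by (intro bounded_imp_bdd_above compact_imp_bounded)

text \<open>A compact parameter set is separable, so the supremum may be taken over a countable dense
  subset, which preserves measurability.\<close>

lemma borel_measurable_SUP_compact: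
  fixes F :: "'t::{metric_space,second_countable_topology} \<Rightarrow> 'w \<Rightarrow> real"
  assumes compact: "compact T" and nonempty: "T \<noteq> {}"
    and meas: "\<And>t. t \<in> T \<Longrightarrow> F t \<in> borel_measurable M"
    and cont: "\<And>x. x \<in> space M \<Longrightarrow> continuous_on T (\<lambda>t. F t x)"
  shows "(\<lambda>x. SUP t\<in>T. F t x) \<in> borel_measurable M"
proof -
  obtain C where C: "countable C" "C \<subseteq> T" "T \<subseteq> closure C"
    using separable by blast
  have closure_C: "closure C = T"
    using C compact_imp_closed[OF compact] closure_minimal by blast
  have "C \<noteq> {}" using C nonempty by auto
  have bdd_C: "bdd_above ((\<lambda>t. F t x) ` C)" if "x \<in> space M" for x
    using bdd_above_image_continuous_on[OF compact cont[OF that]] C(2) by (meson bdd_above_mono image_mono)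
  have SUP_eq: "(SUP t\<in>T. F t x) = (SUP t\<in>C. F t x)" if x: "x \<in> space M" for x
  proof (rule antisym)
    show "(SUP t\<in>T. F t x) \<le> (SUP t\<in>C. F t x)"
    proof (rule cSUP_least[OF nonempty])
      fix t assume "t \<in> T"
      then show "F t x \<le> (SUP t\<in>C. F t x)"
        using continuous_le_on_closure[of C "\<lambda>t. F t x" t "SUP t\<in>C. F t x"] cont[OF x] closure_C
          cSUP_upper[OF _ bdd_C[OF x]] by auto
    qed
    show "(SUP t\<in>C. F t x) \<le> (SUP t\<in>T. F t x)"
      using \<open>C \<noteq> {}\<close> C(2) bdd_above_image_continuous_on[OF compact cont[OF x]]
      by (intro cSUP_subset_mono) auto
  qed
  have "(\<lambda>x. SUP t\<in>C. F t x) \<in> borel_measurable M"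
    using C meas bdd_C by (intro borel_measurable_cSUP) auto
  with measurable_cong[of M "\<lambda>x. SUP t\<in>T. F t x" "\<lambda>x. SUP t\<in>C. F t x"] SUP_eq
  show ?thesis by blast
qed

lemma ennreal_add_le: "ennreal (a + b) \<le> ennreal a + ennreal b"
  by (auto simp: ennreal_plus_if intro!: ennreal_leI)

lemma ennreal_integral_le_nn_integral:
  assumes "integrable M h"
  shows "ennreal (\<integral>x. h x \<partial>M) \<le> (\<integral>\<^sup>+x. ennreal (h x) \<partial>M)"
proof -
  have max_integrable: "integrable M (\<lambda>x. max 0 (h x))" using assms by (intro integrable_max) auto
  have "ennreal (\<integral>x. h x \<partial>M) \<le> ennreal (\<integral>x. max 0 (h x) \<partial>M)"
    using assms max_integrable by (intro ennreal_leI integral_mono) auto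
  also have "\<dots> = (\<integral>\<^sup>+x. ennreal (max 0 (h x)) \<partial>M)"
    using max_integrable by (intro nn_integral_eq_integral[symmetric]) auto
  finally show ?thesis by (simp add: ennreal_max_0)
qed

lemma nn_integral_PiM_reindex:
  assumes "prob_space M" "inj_on h I" "h \<in> I \<rightarrow> K"
    and F: "F \<in> borel_measurable (PiM I (\<lambda>_. M))"
  shows "(\<integral>\<^sup>+Z. F (\<lambda>i\<in>I. Z (h i)) \<partial>PiM K (\<lambda>_. M)) = (\<integral>\<^sup>+S. F S \<partial>PiM I (\<lambda>_. M))"
proof -
  have distr: "distr (PiM K (\<lambda>_. M)) (PiM I (\<lambda>_. M)) (\<lambda>Z. \<lambda>i\<in>I. Z (h i)) = PiM I (\<lambda>_. M)"
    using distr_PiM_reindex[of K "\<lambda>_. M" h I] assms(1-3) by simp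
  have reindex: "(\<lambda>Z. \<lambda>i\<in>I. Z (h i)) \<in> measurable (PiM K (\<lambda>_. M)) (PiM I (\<lambda>_. M))"
    using assms(3) by (intro measurable_restrict measurable_component_singleton) auto
  have "(\<integral>\<^sup>+S. F S \<partial>PiM I (\<lambda>_. M))
      = (\<integral>\<^sup>+S. F S \<partial>distr (PiM K (\<lambda>_. M)) (PiM I (\<lambda>_. M)) (\<lambda>Z. \<lambda>i\<in>I. Z (h i)))"
    by (simp add: distr)
  also have "\<dots> = (\<integral>\<^sup>+Z. F (\<lambda>i\<in>I. Z (h i)) \<partial>PiM K (\<lambda>_. M))"
    by (rule nn_integral_distr[OF reindex]) (simp add: distr F)
  finally show ?thesis ..
qed

abbreviation signs :: "nat \<Rightarrow> (nat \<Rightarrow> real) set" where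
  "signs N \<equiv> {..<N} \<rightarrow>\<^sub>E {-1, 1}"

definition flip_signs :: "nat \<Rightarrow> (nat \<Rightarrow> real) \<Rightarrow> nat \<Rightarrow> real" where
  "flip_signs N \<sigma> = (\<lambda>i\<in>{..<N}. - \<sigma> i)"

lemma bij_betw_flip_signs: "bij_betw (flip_signs N) (signs N) (signs N)"
proof -
  have flip_signs_in: "flip_signs N \<sigma> \<in> signs N" if "\<sigma> \<in> signs N" for \<sigma>
    using that unfolding flip_signs_def restrict_PiE_iff by (auto simp: PiE_mem)
  have flip_flip: "flip_signs N (flip_signs N \<sigma>) = \<sigma>" if "\<sigma> \<in> signs N" for \<sigma>
    using PiE_arb[OF that] by (auto simp: flip_signs_def fun_eq_iff)
  have into: "flip_signs N \<in> signs N \<rightarrow> signs N"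
    by (intro funcsetI flip_signs_in)
  show ?thesis
    by (rule bij_betwI[where g = "flip_signs N", OF into into]) (simp_all add: flip_flip)
qed

definition sign_swap :: "nat \<Rightarrow> (nat \<Rightarrow> real) \<Rightarrow> nat \<Rightarrow> nat" where
  "sign_swap N \<sigma> k =
     (if k < N then (if \<sigma> k = 1 then k else k + N)
      else if k < 2 * N then (if \<sigma> (k - N) = 1 then k else k - N) else k)"

lemma bij_betw_sign_swap: "bij_betw (sign_swap N \<sigma>) {..<2 * N} {..<2 * N}"
  by (rule bij_betwI[where g = "sign_swap N \<sigma>"]) (auto simp: sign_swap_def)

definition rademacher_sup :: "nat \<Rightarrow> 't set \<Rightarrow> ('t \<Rightarrow> 'd \<Rightarrow> real) \<Rightarrow> (nat \<Rightarrow> real) \<Rightarrow> (nat \<Rightarrow> 'd) \<Rightarrow> real" where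
  "rademacher_sup N T f \<sigma> S = (SUP t\<in>T. \<Sum>i<N. \<sigma> i * f t (S i))"

lemma rademacher_image_eq:
  "rademacher N (f ` T) S = (1 / real N) * ((\<Sum>\<sigma>\<in>signs N. rademacher_sup N T f \<sigma> S) / 2 ^ N)"
  by (simp add: rademacher_def rademacher_sup_def image_image)

text \<open>For \<open>\<sigma> = 1\<close> this is the supremum over \<open>t\<^sub>1, t\<^sub>2 \<in> T\<close> of
  \<open>\<Sum>i<N. (f t\<^sub>1 - f t\<^sub>2) (Z i) - (f t\<^sub>1 - f t\<^sub>2) (Z (N + i))\<close>, the largest deviation between the two
  halves of a double sample \<open>Z\<close>.\<close>

definition two_sample_dev :: "nat \<Rightarrow> 't set \<Rightarrow> ('t \<Rightarrow> 'd \<Rightarrow> real) \<Rightarrow> (nat \<Rightarrow> real) \<Rightarrow> (nat \<Rightarrow> 'd) \<Rightarrow> real" where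
  "two_sample_dev N T f \<sigma> Z =
     (SUP t\<in>T. \<Sum>i<N. \<sigma> i * (f t (Z i) - f t (Z (N + i))))
     + (SUP t\<in>T. \<Sum>i<N. - \<sigma> i * (f t (Z i) - f t (Z (N + i))))"

definition emp_dev :: "nat \<Rightarrow> (nat \<Rightarrow> 'd) \<Rightarrow> 'd measure \<Rightarrow> ('d \<Rightarrow> real) \<Rightarrow> real" where
  "emp_dev N S D h = emp_mean N S h - (\<integral>x. h x \<partial>D)"

locale loss_class =
  fixes D :: "'d measure" and T :: "'t::{metric_space,second_countable_topology} set"
    and f :: "'t \<Rightarrow> 'd \<Rightarrow> real" and N :: nat
  assumes prob_space_D: "prob_space D" and compact_T: "compact T" and T_nonempty: "T \<noteq> {}"
    and integrable_f: "\<And>t. t \<in> T \<Longrightarrow> integrable D (f t)"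
    and continuous_on_f: "\<And>d. d \<in> space D \<Longrightarrow> continuous_on T (\<lambda>t. f t d)"
begin

abbreviation samples :: "nat set \<Rightarrow> (nat \<Rightarrow> 'd) measure" where
  "samples K \<equiv> PiM K (\<lambda>_. D)"

lemma samples_component_space: "Z \<in> space (samples K) \<Longrightarrow> k \<in> K \<Longrightarrow> Z k \<in> space D"
  by (auto simp: space_PiM PiE_iff)

lemma borel_measurable_f_component:
  "t \<in> T \<Longrightarrow> k \<in> K \<Longrightarrow> (\<lambda>Z. f t (Z k)) \<in> borel_measurable (samples K)"
  using integrable_f by (intro measurable_compose[OF measurable_component_singleton[of k K]]) auto

lemma bdd_above_weighted_sum:
  assumes "\<And>i. i < n \<Longrightarrow> S i \<in> space D"
  shows "bdd_above ((\<lambda>t. \<Sum>i<n. c i * f t (S i)) ` T)"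
  using assms by (intro bdd_above_image_continuous_on compact_T continuous_intros continuous_on_f) auto

lemma bdd_above_weighted_diff:
  assumes "\<And>i. i < 2 * N \<Longrightarrow> Z i \<in> space D"
  shows "bdd_above ((\<lambda>t. \<Sum>i<N. c i * (f t (Z i) - f t (Z (N + i)))) ` T)"
  using assms by (intro bdd_above_image_continuous_on compact_T continuous_intros continuous_on_f) auto

lemma continuous_on_emp_mean:
  assumes "\<And>i. i < N \<Longrightarrow> S i \<in> space D"
  shows "continuous_on T (\<lambda>t. emp_mean N S (f t))"
  unfolding emp_mean_def divide_inverse using assms by (intro continuous_intros continuous_on_f) auto

lemma borel_measurable_rademacher:
  assumes h: "\<And>i. i < N \<Longrightarrow> h i \<in> K"
  shows "(\<lambda>Z. rademacher N (f ` T) (\<lambda>i. Z (h i))) \<in> borel_measurable (samples K)"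
proof -
  have "(\<lambda>Z. rademacher_sup N T f \<sigma> (\<lambda>i. Z (h i))) \<in> borel_measurable (samples K)" for \<sigma>
    unfolding rademacher_sup_def
  proof (rule borel_measurable_SUP_compact[OF compact_T T_nonempty])
    show "(\<lambda>Z. \<Sum>i<N. \<sigma> i * f t (Z (h i))) \<in> borel_measurable (samples K)" if "t \<in> T" for t
      using h that by (intro borel_measurable_sum borel_measurable_times borel_measurable_const
          borel_measurable_f_component) auto
    show "continuous_on T (\<lambda>t. \<Sum>i<N. \<sigma> i * f t (Z (h i)))" if "Z \<in> space (samples K)" for Z
      using h samples_component_space[OF that] by (intro continuous_intros continuous_on_f) auto
  qed
  then show ?thesis
    unfolding rademacher_image_eq by measurable
qed

lemma borel_measurable_two_sample_dev:
  "two_sample_dev N T f \<sigma> \<in> borel_measurable (samples {..<2 * N})"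
proof -
  have "(\<lambda>Z. SUP t\<in>T. \<Sum>i<N. c i * (f t (Z i) - f t (Z (N + i)))) \<in> borel_measurable (samples {..<2 * N})"
    for c :: "nat \<Rightarrow> real"
  proof (rule borel_measurable_SUP_compact[OF compact_T T_nonempty])
    show "(\<lambda>Z. \<Sum>i<N. c i * (f t (Z i) - f t (Z (N + i)))) \<in> borel_measurable (samples {..<2 * N})"
      if "t \<in> T" for t
      using that by (intro borel_measurable_sum borel_measurable_times borel_measurable_const
          borel_measurable_diff borel_measurable_f_component) auto
    show "continuous_on T (\<lambda>t. \<Sum>i<N. c i * (f t (Z i) - f t (Z (N + i))))"
      if "Z \<in> space (samples {..<2 * N})" for Z
      using samples_component_space[OF that] by (intro continuous_intros continuous_on_f) auto
  qed
  from this[of \<sigma>] this[of "\<lambda>i. - \<sigma> i"] show ?thesis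
    unfolding two_sample_dev_def by measurable
qed

lemma two_sample_dev_nonneg:
  assumes Z: "\<And>i. i < 2 * N \<Longrightarrow> Z i \<in> space D"
  shows "0 \<le> two_sample_dev N T f \<sigma> Z"
proof -
  obtain t0 where t0: "t0 \<in> T" using T_nonempty by auto
  let ?a = "\<lambda>c t. \<Sum>i<N. c i * (f t (Z i) - f t (Z (N + i)))"
  have upper: "?a c t0 \<le> (SUP t\<in>T. ?a c t)" for c
    by (rule cSUP_upper[OF t0 bdd_above_weighted_diff[OF Z]])
  have "?a \<sigma> t0 + ?a (\<lambda>i. - \<sigma> i) t0 = 0"
    by (simp add: sum.distrib[symmetric])
  with upper[of \<sigma>] upper[of "\<lambda>i. - \<sigma> i"] show ?thesis
    unfolding two_sample_dev_def by linarith
qed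

lemma two_sample_dev_sign_swap:
  assumes "\<sigma> \<in> signs N"
  shows "two_sample_dev N T f (\<lambda>_. 1) (\<lambda>k\<in>{..<2 * N}. Z (sign_swap N \<sigma> k)) = two_sample_dev N T f \<sigma> Z"
proof -
  have swap: "f t (Z (sign_swap N \<sigma> i)) - f t (Z (sign_swap N \<sigma> (N + i)))
      = \<sigma> i * (f t (Z i) - f t (Z (N + i)))" if "i < N" for t i
  proof -
    have "\<sigma> i = 1 \<or> \<sigma> i = -1" using assms that by (auto simp: PiE_iff)
    then show ?thesis using that by (auto simp: sign_swap_def add.commute)
  qed
  have "f t (Z (sign_swap N \<sigma> (N + i))) - f t (Z (sign_swap N \<sigma> i))
      = - (\<sigma> i * (f t (Z i) - f t (Z (N + i))))" if "i < N" for t i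
    using swap[OF that, of t] by linarith
  with swap show ?thesis
    unfolding two_sample_dev_def by simp
qed

lemma two_sample_dev_le_rademacher_sup:
  assumes Z: "\<And>i. i < 2 * N \<Longrightarrow> Z i \<in> space D"
  shows "two_sample_dev N T f \<sigma> Z
    \<le> rademacher_sup N T f \<sigma> Z + rademacher_sup N T f (flip_signs N \<sigma>) (\<lambda>i. Z (N + i))
      + rademacher_sup N T f (flip_signs N \<sigma>) Z + rademacher_sup N T f \<sigma> (\<lambda>i. Z (N + i))"
proof -
  have upper: "(\<Sum>i<N. c i * f t (S i)) \<le> rademacher_sup N T f c S"
    if "t \<in> T" "\<And>i. i < N \<Longrightarrow> S i \<in> space D" for t c S
    unfolding rademacher_sup_def by (rule cSUP_upper[OF that(1) bdd_above_weighted_sum[OF that(2)]])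
  have split: "(SUP t\<in>T. \<Sum>i<N. c i * (f t (Z i) - f t (Z (N + i))))
      \<le> rademacher_sup N T f a Z + rademacher_sup N T f b (\<lambda>i. Z (N + i))"
    if "\<And>i. i < N \<Longrightarrow> a i = c i \<and> b i = - c i" for a b c
  proof (rule cSUP_least[OF T_nonempty])
    fix t assume t: "t \<in> T"
    have "(\<Sum>i<N. c i * (f t (Z i) - f t (Z (N + i))))
        = (\<Sum>i<N. a i * f t (Z i)) + (\<Sum>i<N. b i * f t (Z (N + i)))"
      using that by (simp add: sum.distrib[symmetric] algebra_simps)
    then show "(\<Sum>i<N. c i * (f t (Z i) - f t (Z (N + i))))
        \<le> rademacher_sup N T f a Z + rademacher_sup N T f b (\<lambda>i. Z (N + i))"
      using upper[OF t, of Z a] upper[OF t, of "\<lambda>i. Z (N + i)" b] Z by simp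
  qed
  have "(SUP t\<in>T. \<Sum>i<N. \<sigma> i * (f t (Z i) - f t (Z (N + i))))
      \<le> rademacher_sup N T f \<sigma> Z + rademacher_sup N T f (flip_signs N \<sigma>) (\<lambda>i. Z (N + i))"
    by (rule split) (simp add: flip_signs_def)
  moreover have "(SUP t\<in>T. \<Sum>i<N. - \<sigma> i * (f t (Z i) - f t (Z (N + i))))
      \<le> rademacher_sup N T f (flip_signs N \<sigma>) Z + rademacher_sup N T f \<sigma> (\<lambda>i. Z (N + i))"
    by (rule split) (simp add: flip_signs_def)
  ultimately show ?thesis
    unfolding two_sample_dev_def by linarith
qed

lemma rademacher_nonneg:
  assumes S: "\<And>i. i < N \<Longrightarrow> S i \<in> space D"
  shows "0 \<le> rademacher N (f ` T) S"
proof -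
  obtain t0 where t0: "t0 \<in> T" using T_nonempty by blast
  have upper: "(\<Sum>i<N. c i * f t0 (S i)) \<le> rademacher_sup N T f c S" for c
    unfolding rademacher_sup_def by (rule cSUP_upper[OF t0 bdd_above_weighted_sum[OF S]])
  have cancel: "(\<Sum>i<N. flip_signs N \<sigma> i * f t0 (S i)) = - (\<Sum>i<N. \<sigma> i * f t0 (S i))" for \<sigma>
    by (auto simp: flip_signs_def sum_negf[symmetric] intro!: sum.cong)
  have "0 \<le> rademacher_sup N T f \<sigma> S + rademacher_sup N T f (flip_signs N \<sigma>) S" for \<sigma>
    using upper[of \<sigma>] upper[of "flip_signs N \<sigma>"] cancel[of \<sigma>] by linarith
  then have "0 \<le> (\<Sum>\<sigma>\<in>signs N. rademacher_sup N T f \<sigma> S + rademacher_sup N T f (flip_signs N \<sigma>) S)"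
    by (intro sum_nonneg)
  also have "\<dots> = (\<Sum>\<sigma>\<in>signs N. rademacher_sup N T f \<sigma> S)
      + (\<Sum>\<sigma>\<in>signs N. rademacher_sup N T f (flip_signs N \<sigma>) S)"
    by (rule sum.distrib)
  also have "\<dots> = 2 * (\<Sum>\<sigma>\<in>signs N. rademacher_sup N T f \<sigma> S)"
    using sum.reindex_bij_betw[OF bij_betw_flip_signs, of "\<lambda>\<sigma>. rademacher_sup N T f \<sigma> S" N] by simp
  finally show ?thesis
    unfolding rademacher_image_eq by simp
qed

lemma
  assumes "t \<in> T" "k \<in> K"
  shows integrable_f_component: "integrable (samples K) (\<lambda>Z. f t (Z k))"
    and integral_f_component: "(\<integral>Z. f t (Z k) \<partial>samples K) = (\<integral>x. f t x \<partial>D)"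
proof -
  have distr: "distr (samples K) D (\<lambda>Z. Z k) = D"
    using distr_PiM_component[of K "\<lambda>_. D" k] prob_space_D assms(2) by simp
  have component: "(\<lambda>Z. Z k) \<in> measurable (samples K) D"
    using measurable_component_singleton[of k K "\<lambda>_. D"] assms(2) by simp
  have "f t \<in> borel_measurable D"
    using integrable_f[OF assms(1)] by simp
  from integrable_distr_eq[OF component this] integral_distr[OF component this]
  show "integrable (samples K) (\<lambda>Z. f t (Z k))" "(\<integral>Z. f t (Z k) \<partial>samples K) = (\<integral>x. f t x \<partial>D)"
    using integrable_f[OF assms(1)] unfolding distr by simp_all
qed

text \<open>The ghost sample \<open>Z' N, \<dots>, Z' (2 N - 1)\<close> is independent of the sample \<open>S\<close> and stands in
  for the expectations.\<close>

definition ghost_sample_dev :: "(nat \<Rightarrow> 'd) \<Rightarrow> ennreal" where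
  "ghost_sample_dev S = (\<integral>\<^sup>+Z'. ennreal (two_sample_dev N T f (\<lambda>_. 1) (merge {..<N} {N..<2 * N} (S, Z')) / real N)
     \<partial>samples {N..<2 * N})"

lemma
  fixes S :: "nat \<Rightarrow> 'd"
  assumes "t1 \<in> T" "t2 \<in> T" and N: "N > 0"
  defines "h \<equiv> \<lambda>Z'. (\<Sum>i<N. (f t1 (S i) - f t2 (S i)) - (f t1 (Z' (N + i)) - f t2 (Z' (N + i)))) / real N"
  shows integrable_ghost_sample_diff: "integrable (samples {N..<2 * N}) h"
    and integral_ghost_sample_diff: "(\<integral>Z'. h Z' \<partial>samples {N..<2 * N}) = emp_dev N S D (f t1) - emp_dev N S D (f t2)"
proof -
  interpret ghost: prob_space "samples {N..<2 * N}"
    using prob_space_D by (intro prob_space_PiM) auto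
  have ghost_index: "N + i \<in> {N..<2 * N}" if "i < N" for i
    using that by auto
  have integrable_diff: "integrable (samples {N..<2 * N}) (\<lambda>Z'. c - (f t1 (Z' (N + i)) - f t2 (Z' (N + i))))"
    if "i < N" for c i
    using assms(1,2) ghost_index[OF that] by (intro Bochner_Integration.integrable_diff ghost.integrable_const
        integrable_f_component)
  then show "integrable (samples {N..<2 * N}) h"
    unfolding h_def by (intro integrable_divide Bochner_Integration.integrable_sum) auto
  have integral_diff: "(\<integral>Z'. c - (f t1 (Z' (N + i)) - f t2 (Z' (N + i))) \<partial>samples {N..<2 * N})
      = c - ((\<integral>x. f t1 x \<partial>D) - (\<integral>x. f t2 x \<partial>D))" if "i < N" for c i
    using assms(1,2) ghost_index[OF that]
    by (simp add: Bochner_Integration.integral_diff integrable_f_component integral_f_component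
        ghost.prob_space)
  have "(\<integral>Z'. h Z' \<partial>samples {N..<2 * N})
      = (\<Sum>i<N. (f t1 (S i) - f t2 (S i)) - ((\<integral>x. f t1 x \<partial>D) - (\<integral>x. f t2 x \<partial>D))) / real N"
    unfolding h_def using integrable_diff integral_diff
    by (simp add: Bochner_Integration.integral_sum del: Bochner_Integration.integral_diff)
  also have "\<dots> = emp_dev N S D (f t1) - emp_dev N S D (f t2)"
    using N by (simp add: emp_dev_def emp_mean_def sum_subtractf diff_divide_distrib)
  finally show "(\<integral>Z'. h Z' \<partial>samples {N..<2 * N}) = emp_dev N S D (f t1) - emp_dev N S D (f t2)" .
qed

lemma product_sigma_finite_D: "product_sigma_finite (\<lambda>_. D)"
  unfolding product_sigma_finite_def using prob_space_D by (auto intro: prob_space_imp_sigma_finite)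

lemma ghost_sample_diff_le_two_sample_dev:
  fixes S :: "nat \<Rightarrow> 'd"
  assumes S: "\<And>i. i < N \<Longrightarrow> S i \<in> space D" and Z': "Z' \<in> space (samples {N..<2 * N})"
    and t: "t1 \<in> T" "t2 \<in> T"
  shows "(\<Sum>i<N. (f t1 (S i) - f t2 (S i)) - (f t1 (Z' (N + i)) - f t2 (Z' (N + i))))
    \<le> two_sample_dev N T f (\<lambda>_. 1) (merge {..<N} {N..<2 * N} (S, Z'))"
proof -
  let ?Z = "merge {..<N} {N..<2 * N} (S, Z')"
  have first_half: "?Z i = S i" and second_half: "?Z (N + i) = Z' (N + i)" if "i < N" for i
    using that by (simp_all add: merge_def)
  have Z: "?Z i \<in> space D" if "i < 2 * N" for i
    using that S samples_component_space[OF Z'] by (auto simp: merge_def)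
  let ?a = "\<lambda>c t. \<Sum>i<N. c i * (f t (?Z i) - f t (?Z (N + i)))"
  have upper: "?a c t \<le> (SUP t\<in>T. ?a c t)" if "t \<in> T" for c t
    by (rule cSUP_upper[OF that bdd_above_weighted_diff[OF Z]])
  have "?a c t = (\<Sum>i<N. c i * (f t (S i) - f t (Z' (N + i))))" for c t
    by (rule sum.cong) (simp_all add: first_half second_half)
  then have "(\<Sum>i<N. (f t1 (S i) - f t2 (S i)) - (f t1 (Z' (N + i)) - f t2 (Z' (N + i))))
      = ?a (\<lambda>_. 1) t1 + ?a (\<lambda>_. - 1) t2"
    by (simp only:) (simp add: sum.distrib[symmetric] algebra_simps)
  with upper[OF t(1), of "\<lambda>_. 1"] upper[OF t(2), of "\<lambda>_. - 1"] show ?thesis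
    unfolding two_sample_dev_def by simp
qed

lemma emp_dev_diff_le_ghost_sample_dev:
  assumes S: "\<And>i. i < N \<Longrightarrow> S i \<in> space D" and t: "t1 \<in> T" "t2 \<in> T" and N: "N > 0"
  shows "ennreal (emp_dev N S D (f t1) - emp_dev N S D (f t2)) \<le> ghost_sample_dev S"
proof -
  let ?h = "\<lambda>Z'. (\<Sum>i<N. (f t1 (S i) - f t2 (S i)) - (f t1 (Z' (N + i)) - f t2 (Z' (N + i)))) / real N"
  have "ennreal (emp_dev N S D (f t1) - emp_dev N S D (f t2)) = ennreal (\<integral>Z'. ?h Z' \<partial>samples {N..<2 * N})"
    using integral_ghost_sample_diff[OF t N] by simp
  also have "\<dots> \<le> (\<integral>\<^sup>+Z'. ennreal (?h Z') \<partial>samples {N..<2 * N})"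
    by (rule ennreal_integral_le_nn_integral[OF integrable_ghost_sample_diff[OF t N]])
  also have "\<dots> \<le> ghost_sample_dev S"
    unfolding ghost_sample_dev_def
    by (intro nn_integral_mono ennreal_leI divide_right_mono ghost_sample_diff_le_two_sample_dev S t) auto
  finally show ?thesis .
qed

lemma borel_measurable_ghost_sample_dev: "ghost_sample_dev \<in> borel_measurable (samples {..<N})"
proof -
  interpret product_sigma_finite "\<lambda>_. D" by (rule product_sigma_finite_D)
  interpret finite_product_sigma_finite "\<lambda>_. D" "{N..<2 * N}" by standard auto
  have [measurable]: "two_sample_dev N T f (\<lambda>_. 1) \<in> borel_measurable (samples ({..<N} \<union> {N..<2 * N}))"
    using borel_measurable_two_sample_dev by (simp add: ivl_disj_un_one(2))
  show ?thesis
    unfolding ghost_sample_dev_def by measurable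
qed

lemma nn_integral_ghost_sample_dev:
  "(\<integral>\<^sup>+S. ghost_sample_dev S \<partial>samples {..<N})
    = (\<integral>\<^sup>+Z. ennreal (two_sample_dev N T f (\<lambda>_. 1) Z / real N) \<partial>samples {..<2 * N})"
proof -
  interpret product_sigma_finite "\<lambda>_. D" by (rule product_sigma_finite_D)
  have halves: "{..<N} \<union> {N..<2 * N} = {..<2 * N}" by auto
  have "(\<lambda>Z. ennreal (two_sample_dev N T f (\<lambda>_. 1) Z / real N)) \<in> borel_measurable (samples {..<2 * N})"
    using borel_measurable_two_sample_dev by measurable
  moreover have "{..<N} \<inter> {N..<2 * N} = {}" by auto
  ultimately have "(\<integral>\<^sup>+Z. ennreal (two_sample_dev N T f (\<lambda>_. 1) Z / real N) \<partial>samples {..<2 * N})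
      = (\<integral>\<^sup>+S. \<integral>\<^sup>+Z'. ennreal (two_sample_dev N T f (\<lambda>_. 1) (merge {..<N} {N..<2 * N} (S, Z')) / real N)
          \<partial>samples {N..<2 * N} \<partial>samples {..<N})"
    using product_nn_integral_fold[of "{..<N}" "{N..<2 * N}"] unfolding halves by simp
  then show ?thesis
    unfolding ghost_sample_dev_def halves by simp
qed

text \<open>Exchanging sample points with ghost sample points does not change the law of the double
  sample, so random signs may be inserted.\<close>

lemma nn_integral_two_sample_dev_signs:
  assumes "\<sigma> \<in> signs N"
  shows "(\<integral>\<^sup>+Z. ennreal (two_sample_dev N T f (\<lambda>_. 1) Z / real N) \<partial>samples {..<2 * N})
    = (\<integral>\<^sup>+Z. ennreal (two_sample_dev N T f \<sigma> Z / real N) \<partial>samples {..<2 * N})"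
proof -
  have "inj_on (sign_swap N \<sigma>) {..<2 * N}" "sign_swap N \<sigma> \<in> {..<2 * N} \<rightarrow> {..<2 * N}"
    using bij_betw_sign_swap[of N \<sigma>] by (auto simp: bij_betw_def)
  from nn_integral_PiM_reindex[OF prob_space_D this, of "\<lambda>Z. ennreal (two_sample_dev N T f (\<lambda>_. 1) Z / real N)"]
  show ?thesis
    using borel_measurable_two_sample_dev by (simp add: two_sample_dev_sign_swap[OF assms])
qed

lemma sum_two_sample_dev_le_rademacher:
  assumes Z: "Z \<in> space (samples {..<2 * N})" and N: "N > 0"
  shows "(\<Sum>\<sigma>\<in>signs N. ennreal (two_sample_dev N T f \<sigma> Z / real N))
    \<le> ennreal (2 ^ N * 2) * (ennreal (rademacher N (f ` T) Z) + ennreal (rademacher N (f ` T) (\<lambda>i. Z (N + i))))"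
proof -
  let ?r = "\<lambda>\<sigma> S. rademacher_sup N T f \<sigma> S" and ?Z' = "\<lambda>i. Z (N + i)"
  have Zi: "\<And>i. i < 2 * N \<Longrightarrow> Z i \<in> space D"
    using samples_component_space[OF Z] by simp
  have flip_sum: "(\<Sum>\<sigma>\<in>signs N. ?r (flip_signs N \<sigma>) S) = (\<Sum>\<sigma>\<in>signs N. ?r \<sigma> S)" for S
    by (rule sum.reindex_bij_betw[OF bij_betw_flip_signs])
  have rademacher_sum: "(\<Sum>\<sigma>\<in>signs N. ?r \<sigma> S) = real N * 2 ^ N * rademacher N (f ` T) S" for S
    using N unfolding rademacher_image_eq by simp
  have "(\<Sum>\<sigma>\<in>signs N. two_sample_dev N T f \<sigma> Z)
      \<le> (\<Sum>\<sigma>\<in>signs N. ?r \<sigma> Z + ?r (flip_signs N \<sigma>) ?Z' + ?r (flip_signs N \<sigma>) Z + ?r \<sigma> ?Z')"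
    by (rule sum_mono) (rule two_sample_dev_le_rademacher_sup[OF Zi])
  also have "\<dots> = real N * (2 ^ N * 2 * (rademacher N (f ` T) Z + rademacher N (f ` T) ?Z'))"
    by (simp only: sum.distrib flip_sum rademacher_sum) (simp add: algebra_simps)
  finally have "(\<Sum>\<sigma>\<in>signs N. two_sample_dev N T f \<sigma> Z / real N)
      \<le> 2 ^ N * 2 * (rademacher N (f ` T) Z + rademacher N (f ` T) ?Z')"
    using N by (simp add: sum_divide_distrib[symmetric] divide_le_eq mult.commute)
  moreover have "0 \<le> two_sample_dev N T f \<sigma> Z / real N" for \<sigma>
    using two_sample_dev_nonneg[OF Zi] by simp
  moreover have "0 \<le> rademacher N (f ` T) Z" "0 \<le> rademacher N (f ` T) ?Z'"
    using Zi by (auto intro!: rademacher_nonneg)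
  ultimately show ?thesis
    by (simp add: ennreal_mult'[symmetric] ennreal_plus[symmetric] ennreal_leI del: ennreal_plus)
qed

lemma nn_integral_rademacher_reindex:
  assumes "inj_on h {..<N}" "h \<in> {..<N} \<rightarrow> K"
  shows "(\<integral>\<^sup>+Z. ennreal (rademacher N (f ` T) (\<lambda>i. Z (h i))) \<partial>samples K)
    = (\<integral>\<^sup>+S. ennreal (rademacher N (f ` T) S) \<partial>samples {..<N})"
proof -
  have "rademacher N (f ` T) (\<lambda>i\<in>{..<N}. Z (h i)) = rademacher N (f ` T) (\<lambda>i. Z (h i))" for Z
    by (simp add: rademacher_def)
  with nn_integral_PiM_reindex[OF prob_space_D assms, of "\<lambda>S. ennreal (rademacher N (f ` T) S)"]
    borel_measurable_rademacher[of "\<lambda>i. i" "{..<N}"]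
  show ?thesis by simp
qed

lemma nn_integral_ghost_sample_dev_le:
  assumes N: "N > 0"
  shows "(\<integral>\<^sup>+S. ghost_sample_dev S \<partial>samples {..<N})
    \<le> 4 * (\<integral>\<^sup>+S. ennreal (rademacher N (f ` T) S) \<partial>samples {..<N})"
proof -
  let ?dev = "\<lambda>\<sigma> Z. ennreal (two_sample_dev N T f \<sigma> Z / real N)"
    and ?R = "\<lambda>S. ennreal (rademacher N (f ` T) S)"
  have measurable_dev: "?dev \<sigma> \<in> borel_measurable (samples {..<2 * N})" for \<sigma>
    using borel_measurable_two_sample_dev by measurable
  have measurable_R: "(\<lambda>Z. ?R (\<lambda>i. Z (h i))) \<in> borel_measurable (samples {..<2 * N})"
    if "\<And>i. i < N \<Longrightarrow> h i < 2 * N" for h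
    using borel_measurable_rademacher[of h] that by (simp add: measurable_compose[OF _ measurable_ennreal])
  have first_half: "(\<integral>\<^sup>+Z. ?R Z \<partial>samples {..<2 * N}) = (\<integral>\<^sup>+S. ?R S \<partial>samples {..<N})"
    using nn_integral_rademacher_reindex[of "\<lambda>i. i" "{..<2 * N}"] by simp
  have second_half: "(\<integral>\<^sup>+Z. ?R (\<lambda>i. Z (N + i)) \<partial>samples {..<2 * N}) = (\<integral>\<^sup>+S. ?R S \<partial>samples {..<N})"
    by (rule nn_integral_rademacher_reindex) (auto simp: inj_on_def)
  have "ennreal (2 ^ N) * (\<integral>\<^sup>+S. ghost_sample_dev S \<partial>samples {..<N})
      = (\<Sum>\<sigma>\<in>signs N. \<integral>\<^sup>+Z. ?dev (\<lambda>_. 1) Z \<partial>samples {..<2 * N})"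
    by (simp add: nn_integral_ghost_sample_dev card_PiE ennreal_power[symmetric])
  also have "\<dots> = (\<Sum>\<sigma>\<in>signs N. \<integral>\<^sup>+Z. ?dev \<sigma> Z \<partial>samples {..<2 * N})"
    by (rule sum.cong[OF refl nn_integral_two_sample_dev_signs])
  also have "\<dots> = (\<integral>\<^sup>+Z. (\<Sum>\<sigma>\<in>signs N. ?dev \<sigma> Z) \<partial>samples {..<2 * N})"
    by (rule nn_integral_sum[symmetric]) (rule measurable_dev)
  also have "\<dots> \<le> (\<integral>\<^sup>+Z. ennreal (2 ^ N * 2) * (?R Z + ?R (\<lambda>i. Z (N + i))) \<partial>samples {..<2 * N})"
    using N by (intro nn_integral_mono sum_two_sample_dev_le_rademacher)
  also have "\<dots> = ennreal (2 ^ N * 2) * ((\<integral>\<^sup>+S. ?R S \<partial>samples {..<N}) + (\<integral>\<^sup>+S. ?R S \<partial>samples {..<N}))"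
    using measurable_R[of "\<lambda>i. i"] measurable_R[of "\<lambda>i. N + i"]
    by (simp add: nn_integral_cmult nn_integral_add first_half second_half)
  also have "\<dots> = ennreal (2 ^ N) * (4 * (\<integral>\<^sup>+S. ?R S \<partial>samples {..<N}))"
    by (simp add: ennreal_mult' mult_2[symmetric] mult_ac)
  finally show ?thesis
    by (subst (asm) ennreal_mult_le_mult_iff) auto
qed

end

lemma ennreal_le_ghost_sample_devs:
  assumes P: "loss_class D TP fp" and Q: "loss_class D TQ fu" and rho: "\<rho> \<ge> 0" and N: "N > 0"
    and S: "S \<in> space (PiM {..<N} (\<lambda>_. D))"
    and dev: "\<And>e. e > 0 \<Longrightarrow> \<exists>t1\<in>TP. \<exists>t2\<in>TP. \<exists>t3\<in>TQ. \<exists>t4\<in>TQ.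
      L \<le> emp_dev N S D (fp t1) - emp_dev N S D (fp t2) + \<rho> * (emp_dev N S D (fu t3) - emp_dev N S D (fu t4)) + e"
  shows "ennreal L \<le> loss_class.ghost_sample_dev D TP fp N S + ennreal \<rho> * loss_class.ghost_sample_dev D TQ fu N S"
proof (rule ennreal_le_epsilon)
  interpret P: loss_class D TP fp N by (rule P)
  interpret Q: loss_class D TQ fu N by (rule Q)
  fix e :: real assume "0 < e"
  then obtain t1 t2 t3 t4 where t: "t1 \<in> TP" "t2 \<in> TP" "t3 \<in> TQ" "t4 \<in> TQ"
    and L: "L \<le> emp_dev N S D (fp t1) - emp_dev N S D (fp t2)
      + \<rho> * (emp_dev N S D (fu t3) - emp_dev N S D (fu t4)) + e"
    using dev by blast
  have Si: "\<And>i. i < N \<Longrightarrow> S i \<in> space D"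
    using P.samples_component_space[OF S] by simp
  define dP where "dP = emp_dev N S D (fp t1) - emp_dev N S D (fp t2)"
  define dQ where "dQ = emp_dev N S D (fu t3) - emp_dev N S D (fu t4)"
  have "ennreal L \<le> ennreal (dP + \<rho> * dQ) + ennreal e"
    using ennreal_leI[OF L] ennreal_add_le[of "dP + \<rho> * dQ" e] unfolding dP_def dQ_def by simp
  also have "\<dots> \<le> ennreal dP + ennreal \<rho> * ennreal dQ + ennreal e"
    using ennreal_add_le[of dP "\<rho> * dQ"] unfolding ennreal_mult'[OF rho] by (rule add_right_mono)
  also have "\<dots> \<le> P.ghost_sample_dev S + ennreal \<rho> * Q.ghost_sample_dev S + ennreal e"
    unfolding dP_def dQ_def
    using P.emp_dev_diff_le_ghost_sample_dev[OF Si t(1,2) N] Q.emp_dev_diff_le_ghost_sample_dev[OF Si t(3,4) N]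
    by (intro add_mono mult_left_mono) auto
  finally show "ennreal L \<le> P.ghost_sample_dev S + ennreal \<rho> * Q.ghost_sample_dev S + ennreal e" .
qed

theorem nn_integral_le_rademacher_two_classes:
  assumes P: "loss_class D TP fp" and Q: "loss_class D TQ fu" and rho: "\<rho> \<ge> 0" and N: "N > 0"
    and dev: "\<And>S e. S \<in> space (PiM {..<N} (\<lambda>_. D)) \<Longrightarrow> e > 0 \<Longrightarrow>
      \<exists>t1\<in>TP. \<exists>t2\<in>TP. \<exists>t3\<in>TQ. \<exists>t4\<in>TQ. L S \<le> emp_dev N S D (fp t1) - emp_dev N S D (fp t2)
        + \<rho> * (emp_dev N S D (fu t3) - emp_dev N S D (fu t4)) + e"
  shows "(\<integral>\<^sup>+S. ennreal (L S) \<partial>PiM {..<N} (\<lambda>_. D))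
    \<le> 4 * (\<integral>\<^sup>+S. ennreal (rademacher N (fp ` TP) S + \<rho> * rademacher N (fu ` TQ) S) \<partial>PiM {..<N} (\<lambda>_. D))"
proof -
  interpret P: loss_class D TP fp N by (rule P)
  interpret Q: loss_class D TQ fu N by (rule Q)
  let ?M = "PiM {..<N} (\<lambda>_. D)" and ?RP = "\<lambda>S. rademacher N (fp ` TP) S" and ?RQ = "\<lambda>S. rademacher N (fu ` TQ) S"
  have "(\<integral>\<^sup>+S. ennreal (L S) \<partial>?M) \<le> (\<integral>\<^sup>+S. P.ghost_sample_dev S + ennreal \<rho> * Q.ghost_sample_dev S \<partial>?M)"
    using ennreal_le_ghost_sample_devs[OF P Q rho N _ dev] by (intro nn_integral_mono) auto
  also have "\<dots> = (\<integral>\<^sup>+S. P.ghost_sample_dev S \<partial>?M) + ennreal \<rho> * (\<integral>\<^sup>+S. Q.ghost_sample_dev S \<partial>?M)"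
    using P.borel_measurable_ghost_sample_dev Q.borel_measurable_ghost_sample_dev
    by (simp add: nn_integral_add nn_integral_cmult)
  also have "\<dots> \<le> 4 * (\<integral>\<^sup>+S. ennreal (?RP S) \<partial>?M) + ennreal \<rho> * (4 * (\<integral>\<^sup>+S. ennreal (?RQ S) \<partial>?M))"
    using P.nn_integral_ghost_sample_dev_le[OF N] Q.nn_integral_ghost_sample_dev_le[OF N]
    by (intro add_mono mult_left_mono) auto
  also have "\<dots> = 4 * (\<integral>\<^sup>+S. ennreal (?RP S) + ennreal \<rho> * ennreal (?RQ S) \<partial>?M)"
    using P.borel_measurable_rademacher[of "\<lambda>i. i"] Q.borel_measurable_rademacher[of "\<lambda>i. i"]
    by (simp add: nn_integral_add nn_integral_cmult measurable_compose[OF _ measurable_ennreal]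
        distrib_left mult.left_commute)
  also have "\<dots> = 4 * (\<integral>\<^sup>+S. ennreal (?RP S + \<rho> * ?RQ S) \<partial>?M)"
    using rho P.samples_component_space
    by (intro arg_cong[where f = "(*) 4"] nn_integral_cong)
      (simp add: ennreal_mult' P.rademacher_nonneg Q.rademacher_nonneg)
  finally show ?thesis .
qed

text \<open>\<open>SUP\<close> and \<open>INF\<close> of unbounded sets of reals are junk values, which is why the unbounded
  cases are handled by choosing \<open>v\<close> or \<open>w\<close> directly.\<close>

lemma SUP_plus_INF_approx:
  fixes F :: "'b \<Rightarrow> real" and G :: "'c \<Rightarrow> real"
  assumes V: "V \<noteq> {}" and w0: "w0 \<in> W" and rho: "\<rho> > 0" and e: "e > 0"
    and a: "a \<le> (SUP v\<in>V. F v) + \<rho> * (INF w\<in>W. G w)"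
  shows "\<exists>v\<in>V. \<exists>w\<in>W. a - \<rho> * G w0 \<le> F v + \<rho> * (G w0 - G w) + e"
proof (cases "bdd_below (G ` W)")
  case False
  obtain v0 where v0: "v0 \<in> V" using V by blast
  from False obtain w where w: "w \<in> W" "G w < G w0 - (a - \<rho> * G w0 - F v0) / \<rho>"
    by (auto simp: bdd_below_def not_le)
  then have "a - \<rho> * G w0 - F v0 \<le> \<rho> * (G w0 - G w)"
    using rho by (simp add: field_simps)
  then have "a - \<rho> * G w0 \<le> F v0 + \<rho> * (G w0 - G w) + e"
    using e by linarith
  with v0 w(1) show ?thesis by blast
next
  case bdd_G: True
  show ?thesis
  proof (cases "bdd_above (F ` V)")
    case False
    then obtain v where "v \<in> V" "a - \<rho> * G w0 < F v"
      by (auto simp: bdd_above_def not_le)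
    moreover have "a - \<rho> * G w0 \<le> F v + \<rho> * (G w0 - G w0) + e"
      using calculation(2) e by simp
    ultimately show ?thesis
      using w0 by blast
  next
    case True
    obtain v where "v \<in> V" "(SUP v\<in>V. F v) - e < F v"
      using less_cSUP_iff[OF V True, of "(SUP v\<in>V. F v) - e"] e by auto
    moreover have "\<rho> * (INF w\<in>W. G w) \<le> \<rho> * G w0"
      using cINF_lower[OF bdd_G w0] rho by simp
    ultimately have "a - \<rho> * G w0 \<le> F v + \<rho> * (G w0 - G w0) + e"
      using a by simp
    with \<open>v \<in> V\<close> w0 show ?thesis
      by blast
  qed
qed

lemma minmax_objective_deviation:
  fixes Ep Sp :: "'a \<times> 'b \<Rightarrow> real" and Eu Su :: "'a \<times> 'c \<Rightarrow> real"
  assumes rho: "\<rho> > 0" and e: "e > 0"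
    and mem: "us \<in> U" "vs \<in> V" "ws \<in> W" "uh \<in> U" "vh \<in> V" "wh \<in> W"
    and vs_opt: "\<And>v. v \<in> V \<Longrightarrow> - Ep (us, v) \<le> - Ep (us, vs)"
    and ws_opt: "\<And>w. w \<in> W \<Longrightarrow> Eu (us, ws) \<le> Eu (us, w)"
    and us_opt: "(SUP v\<in>V. - Ep (us, v)) + \<rho> * (INF w\<in>W. Eu (us, w))
      \<le> (SUP v\<in>V. - Ep (uh, v)) + \<rho> * (INF w\<in>W. Eu (uh, w))"
    and vh_opt: "\<And>v. v \<in> V \<Longrightarrow> - Sp (uh, v) \<le> - Sp (uh, vh)"
    and wh_opt: "\<And>w. w \<in> W \<Longrightarrow> Su (uh, wh) \<le> Su (uh, w)"
    and uh_opt: "(SUP v\<in>V. - Sp (uh, v)) + \<rho> * (INF w\<in>W. Su (uh, w))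
      \<le> (SUP v\<in>V. - Sp (us, v)) + \<rho> * (INF w\<in>W. Su (us, w))"
    and v1: "v1 \<in> V" "\<And>v. v \<in> V \<Longrightarrow> - Sp (us, v) \<le> - Sp (us, v1)"
    and w1: "w1 \<in> W" "\<And>w. w \<in> W \<Longrightarrow> Su (us, w1) \<le> Su (us, w)"
  shows "\<exists>t1\<in>U \<times> V. \<exists>t2\<in>U \<times> V. \<exists>t3\<in>U \<times> W. \<exists>t4\<in>U \<times> W.
    \<bar>(- Ep (us, vs) + \<rho> * Eu (us, ws)) - (- Ep (uh, vh) + \<rho> * Eu (uh, wh))\<bar>
      \<le> (Sp t1 - Ep t1) - (Sp t2 - Ep t2) + \<rho> * ((Su t3 - Eu t3) - (Su t4 - Eu t4)) + e"
proof -
  define A where "A = - Ep (us, vs) + \<rho> * Eu (us, ws)"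
  define B where "B = - Ep (uh, vh) + \<rho> * Eu (uh, wh)"
  have SUP_eq: "(SUP v\<in>V. F v) = F v0" if "v0 \<in> V" "\<And>v. v \<in> V \<Longrightarrow> F v \<le> F v0" for F :: "'b \<Rightarrow> real" and v0
    using that by (intro cSup_eq_maximum) auto
  have INF_eq: "(INF w\<in>W. G w) = G w0" if "w0 \<in> W" "\<And>w. w \<in> W \<Longrightarrow> G w0 \<le> G w" for G :: "'c \<Rightarrow> real" and w0
    using that by (intro cInf_eq_minimum) auto
  have "(SUP v\<in>V. - Sp (uh, v)) = - Sp (uh, vh)" "(INF w\<in>W. Su (uh, w)) = Su (uh, wh)"
    "(SUP v\<in>V. - Sp (us, v)) = - Sp (us, v1)" "(INF w\<in>W. Su (us, w)) = Su (us, w1)"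
    using mem vh_opt wh_opt v1 w1 by (auto intro: SUP_eq INF_eq)
  with uh_opt have "- Sp (uh, vh) + \<rho> * Su (uh, wh) \<le> - Sp (us, v1) + \<rho> * Su (us, w1)"
    by simp
  moreover have "\<rho> * Su (us, w1) \<le> \<rho> * Su (us, ws)"
    using w1(2)[OF mem(3)] rho by simp
  ultimately have B_minus_A: "B - A \<le> (Sp (uh, vh) - Ep (uh, vh)) - (Sp (us, v1) - Ep (us, v1))
      + \<rho> * ((Su (us, ws) - Eu (us, ws)) - (Su (uh, wh) - Eu (uh, wh)))"
    using vs_opt[OF v1(1)] unfolding A_def B_def by (simp add: algebra_simps)
  have "(SUP v\<in>V. - Ep (us, v)) = - Ep (us, vs)" "(INF w\<in>W. Eu (us, w)) = Eu (us, ws)"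
    using mem vs_opt ws_opt by (auto intro: SUP_eq INF_eq)
  with us_opt have "A \<le> (SUP v\<in>V. - Ep (uh, v)) + \<rho> * (INF w\<in>W. Eu (uh, w))"
    unfolding A_def by simp
  then obtain v2 w2 where v2: "v2 \<in> V" and w2: "w2 \<in> W"
    and "A - \<rho> * Eu (uh, wh) \<le> - Ep (uh, v2) + \<rho> * (Eu (uh, wh) - Eu (uh, w2)) + e"
    using SUP_plus_INF_approx[OF _ mem(6) rho e, of V A "\<lambda>v. - Ep (uh, v)" "\<lambda>w. Eu (uh, w)"] mem(2) by blast
  moreover have "\<rho> * Su (uh, wh) \<le> \<rho> * Su (uh, w2)"
    using wh_opt[OF w2] rho by simp
  ultimately have A_minus_B: "A - B \<le> (Sp (uh, v2) - Ep (uh, v2)) - (Sp (uh, vh) - Ep (uh, vh))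
      + \<rho> * ((Su (uh, w2) - Eu (uh, w2)) - (Su (uh, wh) - Eu (uh, wh))) + e"
    using vh_opt[OF v2] unfolding B_def by (simp add: algebra_simps)
  show ?thesis
  proof (cases "B \<le> A")
    case True
    with A_minus_B have "\<bar>A - B\<bar> \<le> (Sp (uh, v2) - Ep (uh, v2)) - (Sp (uh, vh) - Ep (uh, vh))
        + \<rho> * ((Su (uh, w2) - Eu (uh, w2)) - (Su (uh, wh) - Eu (uh, wh))) + e"
      by simp
    with v2 w2 mem show ?thesis
      unfolding A_def B_def by blast
  next
    case False
    with B_minus_A e have "\<bar>A - B\<bar> \<le> (Sp (uh, vh) - Ep (uh, vh)) - (Sp (us, v1) - Ep (us, v1))
        + \<rho> * ((Su (us, ws) - Eu (us, ws)) - (Su (uh, wh) - Eu (uh, wh))) + e"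
      by simp
    with v1 mem show ?thesis
      unfolding A_def B_def by blast
  qed
qed

lemma emp_mean_uminus: "emp_mean N S (\<lambda>x. - h x) = - emp_mean N S h"
  by (simp add: emp_mean_def sum_negf)

text \<open>\<open>fp (u, v)\<close> and \<open>fu (u, w)\<close> are the losses \<open>l\<^sub>p(u, v)\<close> and \<open>l\<^sub>u(u, w)\<close> as functions of a data
  point; \<open>(us, vs, ws)\<close> solves the population problem and \<open>(uh S, vh S, wh S)\<close> the empirical
  problem for the sample \<open>S\<close>.\<close>

locale minmax_erm = P: loss_class D "U \<times> V" fp N + Q: loss_class D "U \<times> W" fu N
  for D :: "'d measure" and U :: "'a::{metric_space,second_countable_topology} set"
    and V :: "'b::{metric_space,second_countable_topology} set"
    and W :: "'c::{metric_space,second_countable_topology} set"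
    and fp :: "'a \<times> 'b \<Rightarrow> 'd \<Rightarrow> real" and fu :: "'a \<times> 'c \<Rightarrow> 'd \<Rightarrow> real" and N :: nat +
  fixes \<rho> :: real and us :: 'a and vs :: 'b and ws :: 'c
    and uh :: "(nat \<Rightarrow> 'd) \<Rightarrow> 'a" and vh :: "(nat \<Rightarrow> 'd) \<Rightarrow> 'b" and wh :: "(nat \<Rightarrow> 'd) \<Rightarrow> 'c"
  assumes rho_pos: "\<rho> > 0" and N_pos: "N > 0"
    and us: "us \<in> U" and vs: "vs \<in> V" and ws: "ws \<in> W"
    and vs_opt: "\<And>v. v \<in> V \<Longrightarrow> (\<integral>d. - fp (us, v) d \<partial>D) \<le> (\<integral>d. - fp (us, vs) d \<partial>D)"
    and ws_opt: "\<And>w. w \<in> W \<Longrightarrow> (\<integral>d. fu (us, ws) d \<partial>D) \<le> (\<integral>d. fu (us, w) d \<partial>D)"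
    and us_opt: "\<And>u. u \<in> U \<Longrightarrow>
      (SUP v\<in>V. \<integral>d. - fp (us, v) d \<partial>D) + \<rho> * (INF w\<in>W. \<integral>d. fu (us, w) d \<partial>D)
      \<le> (SUP v\<in>V. \<integral>d. - fp (u, v) d \<partial>D) + \<rho> * (INF w\<in>W. \<integral>d. fu (u, w) d \<partial>D)"
    and uh: "\<And>S. S \<in> space (PiM {..<N} (\<lambda>_. D)) \<Longrightarrow> uh S \<in> U"
    and vh: "\<And>S. S \<in> space (PiM {..<N} (\<lambda>_. D)) \<Longrightarrow> vh S \<in> V"
    and wh: "\<And>S. S \<in> space (PiM {..<N} (\<lambda>_. D)) \<Longrightarrow> wh S \<in> W"
    and vh_opt: "\<And>S v. S \<in> space (PiM {..<N} (\<lambda>_. D)) \<Longrightarrow> v \<in> V \<Longrightarrow>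
      emp_mean N S (\<lambda>d. - fp (uh S, v) d) \<le> emp_mean N S (\<lambda>d. - fp (uh S, vh S) d)"
    and wh_opt: "\<And>S w. S \<in> space (PiM {..<N} (\<lambda>_. D)) \<Longrightarrow> w \<in> W \<Longrightarrow>
      emp_mean N S (fu (uh S, wh S)) \<le> emp_mean N S (fu (uh S, w))"
    and uh_opt: "\<And>S u. S \<in> space (PiM {..<N} (\<lambda>_. D)) \<Longrightarrow> u \<in> U \<Longrightarrow>
      (SUP v\<in>V. emp_mean N S (\<lambda>d. - fp (uh S, v) d)) + \<rho> * (INF w\<in>W. emp_mean N S (fu (uh S, w)))
      \<le> (SUP v\<in>V. emp_mean N S (\<lambda>d. - fp (u, v) d)) + \<rho> * (INF w\<in>W. emp_mean N S (fu (u, w)))"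
begin

lemma empirical_inner_optima:
  assumes S: "S \<in> space (PiM {..<N} (\<lambda>_. D))"
  obtains v1 w1 where "v1 \<in> V" "\<And>v. v \<in> V \<Longrightarrow> emp_mean N S (fp (us, v1)) \<le> emp_mean N S (fp (us, v))"
    and "w1 \<in> W" "\<And>w. w \<in> W \<Longrightarrow> emp_mean N S (fu (us, w1)) \<le> emp_mean N S (fu (us, w))"
proof -
  have Si: "\<And>i. i < N \<Longrightarrow> S i \<in> space D"
    using P.samples_component_space[OF S] by simp
  have "snd ` (U \<times> V) = V" "snd ` (U \<times> W) = W"
    using us by force+
  then have "compact V" "compact W"
    using compact_continuous_image[OF continuous_on_snd[OF continuous_on_id] P.compact_T]
      compact_continuous_image[OF continuous_on_snd[OF continuous_on_id] Q.compact_T] by simp_all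
  moreover have "continuous_on V (\<lambda>v. emp_mean N S (fp (us, v)))"
    using us by (intro continuous_on_compose2[OF P.continuous_on_emp_mean[OF Si]] continuous_intros) auto
  moreover have "continuous_on W (\<lambda>w. emp_mean N S (fu (us, w)))"
    using us by (intro continuous_on_compose2[OF Q.continuous_on_emp_mean[OF Si]] continuous_intros) auto
  ultimately have "\<exists>v1\<in>V. \<forall>v\<in>V. emp_mean N S (fp (us, v1)) \<le> emp_mean N S (fp (us, v))"
    "\<exists>w1\<in>W. \<forall>w\<in>W. emp_mean N S (fu (us, w1)) \<le> emp_mean N S (fu (us, w))"
    using continuous_attains_inf vs ws by blast+
  with that show ?thesis by blast
qed

lemma objective_deviation:
  assumes S: "S \<in> space (PiM {..<N} (\<lambda>_. D))" and e: "e > 0"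
  shows "\<exists>t1\<in>U \<times> V. \<exists>t2\<in>U \<times> V. \<exists>t3\<in>U \<times> W. \<exists>t4\<in>U \<times> W.
    \<bar>(\<integral>d. - fp (us, vs) d + \<rho> * fu (us, ws) d \<partial>D) - (\<integral>d. - fp (uh S, vh S) d + \<rho> * fu (uh S, wh S) d \<partial>D)\<bar>
    \<le> emp_dev N S D (fp t1) - emp_dev N S D (fp t2) + \<rho> * (emp_dev N S D (fu t3) - emp_dev N S D (fu t4)) + e"
proof -
  obtain v1 w1 where "v1 \<in> V" "\<And>v. v \<in> V \<Longrightarrow> emp_mean N S (fp (us, v1)) \<le> emp_mean N S (fp (us, v))"
    and "w1 \<in> W" "\<And>w. w \<in> W \<Longrightarrow> emp_mean N S (fu (us, w1)) \<le> emp_mean N S (fu (us, w))"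
    using empirical_inner_optima[OF S] by blast
  then have "\<exists>t1\<in>U \<times> V. \<exists>t2\<in>U \<times> V. \<exists>t3\<in>U \<times> W. \<exists>t4\<in>U \<times> W.
    \<bar>(- (\<integral>d. fp (us, vs) d \<partial>D) + \<rho> * (\<integral>d. fu (us, ws) d \<partial>D))
      - (- (\<integral>d. fp (uh S, vh S) d \<partial>D) + \<rho> * (\<integral>d. fu (uh S, wh S) d \<partial>D))\<bar>
    \<le> (emp_mean N S (fp t1) - (\<integral>d. fp t1 d \<partial>D)) - (emp_mean N S (fp t2) - (\<integral>d. fp t2 d \<partial>D))
      + \<rho> * ((emp_mean N S (fu t3) - (\<integral>d. fu t3 d \<partial>D)) - (emp_mean N S (fu t4) - (\<integral>d. fu t4 d \<partial>D))) + e"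
    using vs_opt ws_opt us_opt[OF uh[OF S]] vh_opt[OF S] wh_opt[OF S] uh_opt[OF S us]
    by (intro minmax_objective_deviation[OF rho_pos e us vs ws uh[OF S] vh[OF S] wh[OF S]])
      (simp_all add: emp_mean_uminus)
  moreover have "(\<integral>d. - fp (u, v) d + \<rho> * fu (u, w) d \<partial>D) = - (\<integral>d. fp (u, v) d \<partial>D) + \<rho> * (\<integral>d. fu (u, w) d \<partial>D)"
    if "u \<in> U" "v \<in> V" "w \<in> W" for u v w
    using that P.integrable_f Q.integrable_f by simp
  ultimately show ?thesis
    using uh[OF S] vh[OF S] wh[OF S] us vs ws by (simp add: emp_dev_def)
qed

theorem expected_objective_deviation_le:
  "(\<integral>\<^sup>+S. ennreal \<bar>(\<integral>d. - fp (us, vs) d + \<rho> * fu (us, ws) d \<partial>D)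
      - (\<integral>d. - fp (uh S, vh S) d + \<rho> * fu (uh S, wh S) d \<partial>D)\<bar> \<partial>PiM {..<N} (\<lambda>_. D))
    \<le> 4 * (\<integral>\<^sup>+S. ennreal (rademacher N (fp ` (U \<times> V)) S + \<rho> * rademacher N (fu ` (U \<times> W)) S)
      \<partial>PiM {..<N} (\<lambda>_. D))"
  using P.loss_class_axioms Q.loss_class_axioms rho_pos N_pos objective_deviation
  by (intro nn_integral_le_rademacher_two_classes) auto

end

lemma loss_class_composite:
  fixes g :: "'x::topological_space \<Rightarrow> 'a::{metric_space,second_countable_topology} \<Rightarrow> 'f::topological_space"
    and h :: "'f \<Rightarrow> 'b::{metric_space,second_countable_topology} \<Rightarrow> 'p::topological_space"
    and loss :: "'p \<Rightarrow> 'r \<Rightarrow> real" and F :: "'a \<times> 'b \<Rightarrow> 'x \<times> 'r \<Rightarrow> real"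
  assumes D: "prob_space D" and UV: "compact U" "compact V" "U \<noteq> {}" "V \<noteq> {}"
    and g: "continuous_on (X \<times> U) (\<lambda>(x, u). g x u)"
    and h: "continuous_on (UNIV \<times> V) (\<lambda>(f, v). h f v)"
    and loss: "\<And>r. continuous_on UNIV (\<lambda>p. loss p r)"
    and X: "\<And>d. d \<in> space D \<Longrightarrow> fst d \<in> X"
    and F: "\<And>u v x r. F (u, v) (x, r) = loss (h (g x u) v) r"
    and integrable: "\<And>t. t \<in> U \<times> V \<Longrightarrow> integrable D (F t)"
  shows "loss_class D (U \<times> V) F"
proof (rule loss_class.intro)
  show "prob_space D" "compact (U \<times> V)" "U \<times> V \<noteq> {}"
    using D UV by (simp_all add: compact_Times)
  show "integrable D (F t)" if "t \<in> U \<times> V" for t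
    using integrable[OF that] .
  show "continuous_on (U \<times> V) (\<lambda>t. F t d)" if "d \<in> space D" for d
  proof -
    obtain x r where d: "d = (x, r)" by fastforce
    have "x \<in> X" using X[OF that] d by simp
    then have "continuous_on (U \<times> V) (\<lambda>t. (\<lambda>(x, u). g x u) (x, fst t))"
      by (intro continuous_on_compose2[OF g]) (auto intro!: continuous_intros)
    then have inner: "continuous_on (U \<times> V) (\<lambda>t. (\<lambda>(f, v). h f v) (g x (fst t), snd t))"
      by (intro continuous_on_compose2[OF h]) (auto intro!: continuous_intros)
    have "continuous_on (U \<times> V) (\<lambda>t. loss (h (g x (fst t)) (snd t)) r)"
      by (rule continuous_on_compose2[OF loss]) (use inner in auto)
    moreover have "F t (x, r) = loss (h (g x (fst t)) (snd t)) r" for t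
      by (cases t) (simp add: F)
    ultimately show ?thesis
      unfolding d by simp
  qed
qed

theorem theorem4:
  fixes X :: "'x::euclidean_space set"
    and U :: "'a::euclidean_space set" and V :: "'b::euclidean_space set" and W :: "'c::euclidean_space set"
    and g :: "'x \<Rightarrow> 'a \<Rightarrow> 'f::euclidean_space"
    and hp :: "'f \<Rightarrow> 'b \<Rightarrow> 'p::topological_space"
    and hu :: "'f \<Rightarrow> 'c \<Rightarrow> 'q::topological_space"
    and lp :: "'p \<Rightarrow> 'y \<Rightarrow> real" and lu :: "'q \<Rightarrow> 'z \<Rightarrow> real"
    and D :: "('x \<times> 'y \<times> 'z) measure"
    and \<rho> :: real and N :: nat
    and us :: 'a and vs :: 'b and ws :: 'c
    and uh :: "(nat \<Rightarrow> 'x \<times> 'y \<times> 'z) \<Rightarrow> 'a"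
    and vh :: "(nat \<Rightarrow> 'x \<times> 'y \<times> 'z) \<Rightarrow> 'b"
    and wh :: "(nat \<Rightarrow> 'x \<times> 'y \<times> 'z) \<Rightarrow> 'c"
  assumes U: "compact U" "convex U"
    and V: "compact V" "convex V"
    and W: "compact W" "convex W"
    and g_cont: "continuous_on (X \<times> U) (\<lambda>(x, u). g x u)"
    and hp_cont: "continuous_on (UNIV \<times> V) (\<lambda>(f, v). hp f v)"
    and hu_cont: "continuous_on (UNIV \<times> W) (\<lambda>(f, w). hu f w)"
    and lp_cont: "\<And>y. continuous_on UNIV (\<lambda>p. lp p y)"
    and lu_cont: "\<And>z. continuous_on UNIV (\<lambda>q. lu q z)"
    and D: "prob_space D"
    and D_X: "\<And>d. d \<in> space D \<Longrightarrow> fst d \<in> X"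
    and int_p: "\<And>u v. u \<in> U \<Longrightarrow> v \<in> V \<Longrightarrow> integrable D (\<lambda>(x, y, z). lp (hp (g x u) v) y)"
    and int_u: "\<And>u w. u \<in> U \<Longrightarrow> w \<in> W \<Longrightarrow> integrable D (\<lambda>(x, y, z). lu (hu (g x u) w) z)"
    and rho: "\<rho> > 0"
    and N: "N > 0"
    \<comment> \<open>population solution (u*, v*, w*)\<close>
    and us: "us \<in> U" and vs: "vs \<in> V" and ws: "ws \<in> W"
    and vs_opt: "\<And>v. v \<in> V \<Longrightarrow>
        (\<integral>(x, y, z). - lp (hp (g x us) v) y \<partial>D) \<le> (\<integral>(x, y, z). - lp (hp (g x us) vs) y \<partial>D)"
    and ws_opt: "\<And>w. w \<in> W \<Longrightarrow>
        (\<integral>(x, y, z). lu (hu (g x us) ws) z \<partial>D) \<le> (\<integral>(x, y, z). lu (hu (g x us) w) z \<partial>D)"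
    and us_opt: "\<And>u. u \<in> U \<Longrightarrow>
        (SUP v\<in>V. \<integral>(x, y, z). - lp (hp (g x us) v) y \<partial>D) + \<rho> * (INF w\<in>W. \<integral>(x, y, z). lu (hu (g x us) w) z \<partial>D)
        \<le> (SUP v\<in>V. \<integral>(x, y, z). - lp (hp (g x u) v) y \<partial>D) + \<rho> * (INF w\<in>W. \<integral>(x, y, z). lu (hu (g x u) w) z \<partial>D)"
    \<comment> \<open>empirical solution (u^, v^, w^) for each sample S\<close>
    and uh: "\<And>S. S \<in> space (PiM {..<N} (\<lambda>_. D)) \<Longrightarrow> uh S \<in> U"
    and vh: "\<And>S. S \<in> space (PiM {..<N} (\<lambda>_. D)) \<Longrightarrow> vh S \<in> V"
    and wh: "\<And>S. S \<in> space (PiM {..<N} (\<lambda>_. D)) \<Longrightarrow> wh S \<in> W"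
    and vh_opt: "\<And>S v. S \<in> space (PiM {..<N} (\<lambda>_. D)) \<Longrightarrow> v \<in> V \<Longrightarrow>
        emp_mean N S (\<lambda>(x, y, z). - lp (hp (g x (uh S)) v) y) \<le> emp_mean N S (\<lambda>(x, y, z). - lp (hp (g x (uh S)) (vh S)) y)"
    and wh_opt: "\<And>S w. S \<in> space (PiM {..<N} (\<lambda>_. D)) \<Longrightarrow> w \<in> W \<Longrightarrow>
        emp_mean N S (\<lambda>(x, y, z). lu (hu (g x (uh S)) (wh S)) z) \<le> emp_mean N S (\<lambda>(x, y, z). lu (hu (g x (uh S)) w) z)"
    and uh_opt: "\<And>S u. S \<in> space (PiM {..<N} (\<lambda>_. D)) \<Longrightarrow> u \<in> U \<Longrightarrow>
        (SUP v\<in>V. emp_mean N S (\<lambda>(x, y, z). - lp (hp (g x (uh S)) v) y))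
          + \<rho> * (INF w\<in>W. emp_mean N S (\<lambda>(x, y, z). lu (hu (g x (uh S)) w) z))
        \<le> (SUP v\<in>V. emp_mean N S (\<lambda>(x, y, z). - lp (hp (g x u) v) y))
          + \<rho> * (INF w\<in>W. emp_mean N S (\<lambda>(x, y, z). lu (hu (g x u) w) z))"
    and uh_meas: "uh \<in> PiM {..<N} (\<lambda>_. D) \<rightarrow>\<^sub>M borel"
    and vh_meas: "vh \<in> PiM {..<N} (\<lambda>_. D) \<rightarrow>\<^sub>M borel"
    and wh_meas: "wh \<in> PiM {..<N} (\<lambda>_. D) \<rightarrow>\<^sub>M borel"
  shows "(\<integral>\<^sup>+ S. ennreal \<bar>(\<integral>(x, y, z). - lp (hp (g x us) vs) y + \<rho> * lu (hu (g x us) ws) z \<partial>D)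
                  - (\<integral>(x, y, z). - lp (hp (g x (uh S)) (vh S)) y + \<rho> * lu (hu (g x (uh S)) (wh S)) z \<partial>D)\<bar>
            \<partial>(PiM {..<N} (\<lambda>_. D)))
       \<le> 4 * (\<integral>\<^sup>+ S. ennreal
                (rademacher N ((\<lambda>(u, v). (\<lambda>(x, y, z). lp (hp (g x u) v) y)) ` (U \<times> V)) S
                 + \<rho> * rademacher N ((\<lambda>(u, w). (\<lambda>(x, y, z). lu (hu (g x u) w) z)) ` (U \<times> W)) S)
            \<partial>(PiM {..<N} (\<lambda>_. D)))"
proof -
  define fp :: "'a \<times> 'b \<Rightarrow> 'x \<times> 'y \<times> 'z \<Rightarrow> real" where "fp = (\<lambda>(u, v). (\<lambda>(x, y, z). lp (hp (g x u) v) y))"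
  define fu :: "'a \<times> 'c \<Rightarrow> 'x \<times> 'y \<times> 'z \<Rightarrow> real" where "fu = (\<lambda>(u, w). (\<lambda>(x, y, z). lu (hu (g x u) w) z))"
  have "loss_class D (U \<times> V) fp"
    by (rule loss_class_composite[OF D U(1) V(1) _ _ g_cont hp_cont, where loss = "\<lambda>p r. lp p (fst r)"])
      (use us vs lp_cont D_X int_p in \<open>auto simp: fp_def\<close>)
  moreover have "loss_class D (U \<times> W) fu"
    by (rule loss_class_composite[OF D U(1) W(1) _ _ g_cont hu_cont, where loss = "\<lambda>q r. lu q (snd r)"])
      (use us ws lu_cont D_X int_u in \<open>auto simp: fu_def\<close>)
  moreover have "minmax_erm_axioms D U V W fp fu N \<rho> us vs ws uh vh wh"
    by unfold_locales (use assms in \<open>simp_all add: fp_def fu_def split_beta'\<close>)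
  ultimately interpret minmax_erm D U V W fp fu N \<rho> us vs ws uh vh wh
    by (intro minmax_erm.intro)
  from expected_objective_deviation_le show ?thesis
    by (simp add: fp_def fu_def split_beta')
qed

end
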